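(* For all integers $k\ge2$ and $m\ge1$, \[u\big((2^k-1)m-k,\;(2^k-1)m\big)=\varepsilon\big((2^k-1)m-k,\;(2^k-1)m\big)=2^{k-1}m.\]
   Context: All matrices are binary. For a nonempty set $S$ of columns of a binary matrix, let $z$ be the sum over the integers of the columns in $S$. $S$ is called $1$-free if no entry of $z$ equals $1$, and even if all entries of $z$ are even. For a binary $m'\times n'$ matrix $A$ with $m'<n'$: $\varepsilon(A)$ is the smallest cardinality of a nonempty even set of columns, and $u(A)$ the smallest cardinality of a nonempty $1$-free set of columns. For $m'<n'$, $\varepsilon(m',n')$ and $u(m',n')$ are the maxima of $\varepsilon(A)$, resp. $u(A)$, over all binary $m'\times n'$ matrices. *)

theory Defs
  imports Main
begin

text \<open>A binary m' x n' matrix is represented as A :: nat \<Rightarrow> nat \<Rightarrow> bool,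
  where A i j is the entry in row i < m', column j < n' (entries outside
  this range are irrelevant).\<close>

definition colsum :: "(nat \<Rightarrow> nat \<Rightarrow> bool) \<Rightarrow> nat set \<Rightarrow> nat \<Rightarrow> int" where
  "colsum A S i = (\<Sum>j\<in>S. if A i j then 1 else 0)"

definition even_set :: "nat \<Rightarrow> nat \<Rightarrow> (nat \<Rightarrow> nat \<Rightarrow> bool) \<Rightarrow> nat set \<Rightarrow> bool" where
  "even_set m n A S \<longleftrightarrow> S \<noteq> {} \<and> S \<subseteq> {..<n} \<and> (\<forall>i<m. even (colsum A S i))"

definition one_free :: "nat \<Rightarrow> nat \<Rightarrow> (nat \<Rightarrow> nat \<Rightarrow> bool) \<Rightarrow> nat set \<Rightarrow> bool" where
  "one_free m n A S \<longleftrightarrow> S \<noteq> {} \<and> S \<subseteq> {..<n} \<and> (\<forall>i<m. colsum A S i \<noteq> 1)"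

definition eps_mat :: "nat \<Rightarrow> nat \<Rightarrow> (nat \<Rightarrow> nat \<Rightarrow> bool) \<Rightarrow> nat" where
  "eps_mat m n A = (LEAST c. \<exists>S. even_set m n A S \<and> card S = c)"

definition u_mat :: "nat \<Rightarrow> nat \<Rightarrow> (nat \<Rightarrow> nat \<Rightarrow> bool) \<Rightarrow> nat" where
  "u_mat m n A = (LEAST c. \<exists>S. one_free m n A S \<and> card S = c)"

definition eps :: "nat \<Rightarrow> nat \<Rightarrow> nat" where
  "eps m n = Max {eps_mat m n A | A. True}"

definition u :: "nat \<Rightarrow> nat \<Rightarrow> nat" where
  "u m n = Max {u_mat m n A | A. True}"

end

theory Submission
  imports Defs
begin

text \<open>
  Upper bound, for every matrix: the column sets with all row sums even form a GF(2)-space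
  under symmetric difference, of dimension at least the number k of columns in excess of rows.
  A fixed column lies in at most half of its members, so by averaging (as in the Plotkin bound)
  some nonzero member has at most n 2^k / (2 (2^k - 1)) = 2^(k-1) m columns; since even sets
  are 1-free, u \<le> \<epsilon> \<le> 2^(k-1) m.

  Lower bound, by induction on k: from an r \<times> N matrix A whose nonempty 1-free sets have at
  least b columns, build a matrix on 2N + m columns having A on the first N columns, a row
  meeting columns v, N + v and an apex column 2N for each v < N, and a row meeting the apex and
  c for each of the m - 1 columns c > 2N. A 1-free set containing the apex contains
  all of the last m columns and one column of each pair {v, N + v}; one avoiding the apex is a
  doubled copy of a 1-free set of A. Either way it has at least N + m columns when N + m \<le> 2b;
  starting from the empty matrix, N = (2^k - 1) m gives N + m = 2^k m at each step.
\<close>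

lemma colsum_sym_diff:
  assumes "finite S" "finite T"
  shows "colsum A (sym_diff S T) i = colsum A S i + colsum A T i - 2 * colsum A (S \<inter> T) i"
proof -
  have "colsum A (S \<union> T) i + colsum A (S \<inter> T) i = colsum A S i + colsum A T i"
    unfolding colsum_def using assms by (rule sum.union_inter)
  moreover have "colsum A (S \<union> T) i = colsum A (sym_diff S T) i + colsum A (S \<inter> T) i"
    unfolding colsum_def using assms
    by (subst sum.subset_diff[of "S \<inter> T"]) (auto simp: Un_Diff_Int[symmetric] intro: sum.cong)
  ultimately show ?thesis by simp
qed

lemma even_colsum_sym_diff:
  assumes "finite S" "finite T"
  shows "even (colsum A (sym_diff S T) i) \<longleftrightarrow> (even (colsum A S i) \<longleftrightarrow> even (colsum A T i))"
  using colsum_sym_diff[OF assms, of A i] by simp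

lemma colsum_eq_card: "finite S \<Longrightarrow> colsum A S i = int (card {j \<in> S. A i j})"
  by (simp add: colsum_def sum.If_cases Int_def)

section \<open>An upper bound for every matrix\<close>

definition even_subsets :: "nat \<Rightarrow> nat \<Rightarrow> (nat \<Rightarrow> nat \<Rightarrow> bool) \<Rightarrow> nat set set" where
  "even_subsets m n A = {S. S \<subseteq> {..<n} \<and> (\<forall>i<m. even (colsum A S i))}"

lemma even_set_iff: "even_set m n A S \<longleftrightarrow> S \<in> even_subsets m n A \<and> S \<noteq> {}"
  by (auto simp: even_set_def even_subsets_def)

lemma empty_in_even_subsets: "{} \<in> even_subsets m n A"
  by (simp add: even_subsets_def colsum_def)

lemma finite_even_subsets: "finite (even_subsets m n A)"
  by (rule finite_subset[of _ "Pow {..<n}"]) (auto simp: even_subsets_def)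

lemma sym_diff_in_even_subsets:
  assumes "S \<in> even_subsets m n A" "T \<in> even_subsets m n A"
  shows "sym_diff S T \<in> even_subsets m n A"
proof -
  have "finite S" "finite T"
    using assms by (auto simp: even_subsets_def intro: finite_subset)
  then show ?thesis
    using assms by (auto simp: even_subsets_def even_colsum_sym_diff)
qed

lemma card_even_subsets_ge:
  assumes "n = m + k"
  shows "2 ^ k \<le> card (even_subsets m n A)"
proof -
  let ?K = "even_subsets m n A"
  define syndrome where "syndrome S = {i. i < m \<and> odd (colsum A S i)}" for S
  define rep where "rep X = (SOME T. T \<subseteq> {..<n} \<and> syndrome T = X)" for X
  define f where "f S = (syndrome S, sym_diff S (rep (syndrome S)))" for S
  have rep: "rep (syndrome S) \<subseteq> {..<n} \<and> syndrome (rep (syndrome S)) = syndrome S"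
    if "S \<subseteq> {..<n}" for S
    unfolding rep_def by (rule someI[of _ S]) (use that in auto)
  have "inj_on f (Pow {..<n})"
    by (rule inj_onI) (auto simp: f_def)
  moreover have "f ` Pow {..<n} \<subseteq> Pow {..<m} \<times> ?K"
  proof (rule image_subsetI)
    fix S assume "S \<in> Pow {..<n}"
    then have S: "S \<subseteq> {..<n}" by simp
    have "\<forall>i<m. even (colsum A S i) \<longleftrightarrow> even (colsum A (rep (syndrome S)) i)"
      using rep[OF S] by (auto simp: syndrome_def set_eq_iff)
    moreover have "finite S" "finite (rep (syndrome S))"
      using S rep[OF S] by (auto intro: finite_subset)
    ultimately have "sym_diff S (rep (syndrome S)) \<in> ?K"
      using S rep[OF S] by (auto simp: even_subsets_def even_colsum_sym_diff)
    then show "f S \<in> Pow {..<m} \<times> ?K"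
      by (auto simp: f_def syndrome_def)
  qed
  ultimately have "card (Pow {..<n}) \<le> card (Pow {..<m} \<times> ?K)"
    by (intro card_inj_on_le) (auto simp: finite_even_subsets)
  then have "2 ^ m * 2 ^ k \<le> 2 ^ m * card ?K"
    by (simp add: card_Pow card_cartesian_product assms power_add)
  then show ?thesis by simp
qed

lemma card_even_subsets_containing:
  "2 * card {S \<in> even_subsets m n A. j \<in> S} \<le> card (even_subsets m n A)"
proof (cases "\<exists>T \<in> even_subsets m n A. j \<in> T")
  case True
  let ?K = "even_subsets m n A"
  from True obtain T where T: "T \<in> ?K" "j \<in> T" by blast
  have "inj_on (sym_diff T) {S \<in> ?K. j \<in> S}"
    by (rule inj_onI) blast
  moreover have "sym_diff T ` {S \<in> ?K. j \<in> S} \<subseteq> {S \<in> ?K. j \<notin> S}"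
    using T sym_diff_in_even_subsets by auto
  ultimately have "card {S \<in> ?K. j \<in> S} \<le> card {S \<in> ?K. j \<notin> S}"
    by (intro card_inj_on_le) (auto simp: finite_even_subsets)
  moreover have "card ?K = card {S \<in> ?K. j \<in> S} + card {S \<in> ?K. j \<notin> S}"
    using finite_even_subsets by (subst card_Un_disjoint[symmetric]) (auto intro: arg_cong[where f = card])
  ultimately show ?thesis by simp
next
  case False
  then have "{S \<in> even_subsets m n A. j \<in> S} = {}" by blast
  then show ?thesis by (simp only: card.empty mult_0_right zero_le)
qed

lemma sum_card_even_subsets_le:
  "2 * (\<Sum>S \<in> even_subsets m n A. card S) \<le> n * card (even_subsets m n A)"
proof -
  let ?K = "even_subsets m n A"
  have "(\<Sum>S\<in>?K. card S) = (\<Sum>S\<in>?K. \<Sum>j<n. of_bool (j \<in> S))"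
    by (intro sum.cong) (auto simp: even_subsets_def Int_absorb1 simp flip: card_eq_sum)
  also have "\<dots> = (\<Sum>j<n. card {S \<in> ?K. j \<in> S})"
    using finite_even_subsets by (subst sum.swap) (simp add: Int_def)
  finally have "2 * (\<Sum>S\<in>?K. card S) = (\<Sum>j<n. 2 * card {S \<in> ?K. j \<in> S})"
    by (simp add: sum_distrib_left)
  also have "\<dots> \<le> (\<Sum>j<n. card ?K)"
    by (intro sum_mono card_even_subsets_containing)
  finally show ?thesis by simp
qed

lemma mult_pred_le_mult_pred:
  fixes c n a N :: nat
  assumes "c * (N - 1) \<le> n * N" "a \<le> N" "1 \<le> a"
  shows "c * (a - 1) \<le> n * a"
proof -
  have "c * (a - 1) * N = c * a * N - c * N"
    by (simp only: diff_mult_distrib diff_mult_distrib2 mult_1_right)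
  also have "\<dots> \<le> c * a * N - c * a"
    using assms(2) by (intro diff_le_mono2) simp
  also have "\<dots> = a * (c * (N - 1))"
    by (simp add: diff_mult_distrib2 ac_simps)
  also have "\<dots> \<le> a * (n * N)"
    using assms(1) by simp
  finally have "c * (a - 1) * N \<le> n * a * N"
    by (simp add: ac_simps)
  then show ?thesis
    using assms(2,3) by simp
qed

lemma exists_even_set_card_le:
  assumes "n = m + k" "1 \<le> k"
  shows "\<exists>S. even_set m n A S \<and> 2 * card S * (2 ^ k - 1) \<le> n * 2 ^ k"
proof -
  let ?K = "even_subsets m n A"
  let ?K' = "?K - {{}}"
  have K: "2 ^ k \<le> card ?K"
    using assms(1) by (rule card_even_subsets_ge)
  moreover have "2 \<le> (2::nat) ^ k"
    using assms(2) by (metis power_one_right power_increasing one_le_numeral)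
  ultimately have "card ?K' \<noteq> 0"
    by (simp only: card_Diff_singleton empty_in_even_subsets finite_even_subsets)
  then have K': "finite ?K'" "?K' \<noteq> {}"
    by (auto simp: finite_even_subsets)
  have "Min (card ` ?K') \<in> card ` ?K'"
    using K' by (intro Min_in) auto
  then obtain S where S: "S \<in> ?K'" "card S = Min (card ` ?K')"
    by (rule imageE) simp
  have "card S * (card ?K - 1) \<le> (\<Sum>T\<in>?K'. card T)"
  proof -
    have "card S \<le> card T" if "T \<in> ?K'" for T
      using S(2) K'(1) that by (auto intro: Min_le)
    then have "card ?K' * card S \<le> (\<Sum>T\<in>?K'. card T)"
      using sum_bounded_below[of ?K' "card S" card] by simp
    moreover have "card ?K' = card ?K - 1"
      by (simp only: card_Diff_singleton empty_in_even_subsets finite_even_subsets)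
    ultimately show ?thesis
      by (simp only: mult.commute)
  qed
  also have "\<dots> = (\<Sum>T\<in>?K. card T)"
    using sum.remove[OF finite_even_subsets empty_in_even_subsets, of card] by simp
  finally have "2 * (card S * (card ?K - 1)) \<le> n * card ?K"
    using sum_card_even_subsets_le[of m n A] by linarith
  then have "2 * card S * (card ?K - 1) \<le> n * card ?K"
    by (simp only: mult.assoc)
  then have "2 * card S * (2 ^ k - 1) \<le> n * 2 ^ k"
    using K by (rule mult_pred_le_mult_pred) (rule one_le_power, simp)
  moreover have "even_set m n A S"
    using S by (simp add: even_set_iff)
  ultimately show ?thesis by blast
qed

lemma le_pred_two_power_mult: "1 \<le> m \<Longrightarrow> k \<le> (2 ^ k - 1) * m"
proof -
  assume "1 \<le> m"
  have "k \<le> 2 ^ k - 1"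
    using less_exp[of k] by linarith
  also have "\<dots> \<le> (2 ^ k - 1) * m"
    using \<open>1 \<le> m\<close> by simp
  finally show ?thesis .
qed

lemma exists_even_set_card_le_half:
  assumes "1 \<le> k" "1 \<le> m"
  shows "\<exists>S. even_set ((2 ^ k - 1) * m - k) ((2 ^ k - 1) * m) A S \<and> card S \<le> 2 ^ (k - 1) * m"
proof -
  let ?n = "(2 ^ k - 1) * m"
  have "?n = (?n - k) + k"
    using le_pred_two_power_mult[OF assms(2)] by simp
  then obtain S where S: "even_set (?n - k) ?n A S" "2 * card S * (2 ^ k - 1) \<le> ?n * 2 ^ k"
    using exists_even_set_card_le assms(1) by blast
  have "(2 ^ k - 1) * (2 * card S) \<le> (2 ^ k - 1) * (2 ^ k * m)"
    using S(2) by (simp only: ac_simps)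
  then have "2 * card S \<le> 2 ^ k * m"
    using one_less_power[of "2::nat" k] assms(1) by simp
  moreover have "(2::nat) ^ k = 2 * 2 ^ (k - 1)"
    using assms(1) by (cases k) simp_all
  ultimately show ?thesis
    using S(1) by auto
qed

section \<open>Matrices attaining the bound\<close>

lemma card_Int_triple_ne_one:
  assumes "card (S \<inter> {a, b, c}) \<noteq> 1" "a \<noteq> b" "a \<noteq> c" "b \<noteq> c"
  shows "c \<in> S \<Longrightarrow> a \<in> S \<or> b \<in> S" and "c \<notin> S \<Longrightarrow> a \<in> S \<longleftrightarrow> b \<in> S"
  using assms by (auto simp: Int_insert_right split: if_splits)

lemma card_Int_pair_ne_one:
  assumes "card (S \<inter> {a, b}) \<noteq> 1" "a \<noteq> b"
  shows "a \<in> S \<longleftrightarrow> b \<in> S"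
  using assms by (auto simp: Int_insert_right split: if_splits)

lemma card_ge_if_meets_all_pairs:
  fixes N :: nat
  assumes "finite S" "\<And>v. v < N \<Longrightarrow> v \<in> S \<or> N + v \<in> S"
  shows "N \<le> card (S \<inter> {..<2 * N})"
proof -
  define g where "g v = (if v \<in> S then v else N + v)" for v
  have "inj_on g {..<N}"
    by (rule inj_onI) (auto simp: g_def split: if_splits)
  moreover have "g ` {..<N} \<subseteq> S \<inter> {..<2 * N}"
    using assms(2) by (auto simp: g_def)
  ultimately show ?thesis
    using card_inj_on_le[of g "{..<N}"] assms(1) by simp
qed

lemma card_eq_double_if_pairs:
  fixes N :: nat
  assumes "S \<subseteq> {..<2 * N}" "\<And>v. v < N \<Longrightarrow> v \<in> S \<longleftrightarrow> N + v \<in> S"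
  shows "card S = 2 * card (S \<inter> {..<N})"
proof -
  let ?P = "S \<inter> {..<N}"
  have "S = ?P \<union> (+) N ` ?P"
  proof (intro equalityI subsetI)
    fix x assume x: "x \<in> S"
    show "x \<in> ?P \<union> (+) N ` ?P"
    proof (cases "x < N")
      case False
      then have "x = N + (x - N)" "x - N < N"
        using x assms(1) by auto
      then have "x - N \<in> ?P"
        using x assms(2) by auto
      then show ?thesis
        using \<open>x = N + (x - N)\<close> by blast
    qed (use x in simp)
  qed (use assms(2) in auto)
  then have "card S = card (?P \<union> (+) N ` ?P)"
    by (rule arg_cong)
  also have "\<dots> = card ?P + card ((+) N ` ?P)"
    using finite_subset[OF assms(1)] by (intro card_Un_disjoint) auto
  also have "\<dots> = 2 * card ?P"
    by (simp add: card_image)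
  finally show ?thesis .
qed

lemma Diff_lessThan_eq_if_apex:
  fixes c :: nat
  assumes "S \<subseteq> {..<c + m}" "\<And>t. t < m - 1 \<Longrightarrow> c \<in> S \<longleftrightarrow> c + t + 1 \<in> S"
  shows "S - {..<c} = (if c \<in> S then {c..<c + m} else {})"
proof (intro equalityI subsetI)
  fix j assume j: "j \<in> S - {..<c}"
  then show "j \<in> (if c \<in> S then {c..<c + m} else {})"
  proof (cases "j = c")
    case False
    then have "j = c + (j - c - 1) + 1" "j - c - 1 < m - 1"
      using j assms(1) by auto
    then show ?thesis
      using j assms(1,2) by auto
  qed (use j assms(1) in auto)
next
  fix j assume j: "j \<in> (if c \<in> S then {c..<c + m} else {})"
  then have j: "c \<in> S" "c \<le> j" "j < c + m"
    by (auto split: if_splits)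
  show "j \<in> S - {..<c}"
  proof (cases "j = c")
    case False
    then have t: "j - c - 1 < m - 1"
      using j by auto
    have "c + (j - c - 1) + 1 \<in> S"
      using assms(2)[OF t] j(1) by blast
    moreover have "j = c + (j - c - 1) + 1"
      using False j(2) by linarith
    ultimately show ?thesis
      using j(2) by (metis DiffI lessThan_iff not_le)
  qed (use j in auto)
qed

definition one_free_card_ge :: "nat \<Rightarrow> nat \<Rightarrow> (nat \<Rightarrow> nat \<Rightarrow> bool) \<Rightarrow> nat \<Rightarrow> bool" where
  "one_free_card_ge m n A b \<longleftrightarrow> (\<forall>S. one_free m n A S \<longrightarrow> b \<le> card S)"

lemma one_free_card_ge_no_columns: "one_free_card_ge m 0 A b"
  by (simp add: one_free_card_ge_def one_free_def)

definition doubling :: "nat \<Rightarrow> nat \<Rightarrow> (nat \<Rightarrow> nat \<Rightarrow> bool) \<Rightarrow> nat \<Rightarrow> nat \<Rightarrow> bool" where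
  "doubling r N A i j =
     (if i < r then j < N \<and> A i j
      else if i < r + N then j \<in> {i - r, N + (i - r), 2 * N}
      else j \<in> {2 * N, 2 * N + (i - (r + N)) + 1})"

lemma colsum_doubling_top:
  assumes "finite S" "i < r"
  shows "colsum (doubling r N A) S i = colsum A (S \<inter> {..<N}) i"
  using assms by (simp add: colsum_eq_card doubling_def)

lemma colsum_doubling_middle:
  assumes "finite S" "v < N"
  shows "colsum (doubling r N A) S (r + v) = int (card (S \<inter> {v, N + v, 2 * N}))"
  using assms by (simp add: colsum_eq_card doubling_def Int_def)

lemma colsum_doubling_bottom:
  assumes "finite S"
  shows "colsum (doubling r N A) S (r + N + t) = int (card (S \<inter> {2 * N, 2 * N + t + 1}))"
  using assms by (simp add: colsum_eq_card doubling_def Int_def)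

lemma one_free_card_ge_doubling:
  assumes A: "one_free_card_ge r N A b" and "N + m \<le> 2 * b"
  shows "one_free_card_ge (r + N + (m - 1)) (2 * N + m) (doubling r N A) (N + m)"
  unfolding one_free_card_ge_def
proof (intro allI impI)
  fix S assume "one_free (r + N + (m - 1)) (2 * N + m) (doubling r N A) S"
  then have S: "S \<noteq> {}" "S \<subseteq> {..<2 * N + m}"
    and no_one: "\<And>i. i < r + N + (m - 1) \<Longrightarrow> colsum (doubling r N A) S i \<noteq> 1"
    by (auto simp: one_free_def)
  have fin: "finite S"
    using S(2) finite_subset by blast
  have middle: "card (S \<inter> {v, N + v, 2 * N}) \<noteq> 1" if "v < N" for v
    using no_one[of "r + v"] colsum_doubling_middle[OF fin that] that by simp
  have "2 * N \<in> S \<longleftrightarrow> 2 * N + t + 1 \<in> S" if "t < m - 1" for t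
    using no_one[of "r + N + t"] colsum_doubling_bottom[OF fin] that
    by (intro card_Int_pair_ne_one) simp_all
  with S(2) have apex_block: "S - {..<2 * N} = (if 2 * N \<in> S then {2 * N..<2 * N + m} else {})"
    by (rule Diff_lessThan_eq_if_apex)
  show "N + m \<le> card S"
  proof (cases "2 * N \<in> S")
    case True
    have "N \<le> card (S \<inter> {..<2 * N})"
    proof (rule card_ge_if_meets_all_pairs[OF fin])
      fix v assume "v < N"
      then show "v \<in> S \<or> N + v \<in> S"
        using card_Int_triple_ne_one(1)[OF middle] True by simp
    qed
    moreover have "card (S - {..<2 * N}) = m"
      using apex_block True by (simp only: if_True card_atLeastLessThan add_diff_cancel_left')
    ultimately show ?thesis
      using card_Int_Diff[OF fin, of "{..<2 * N}"] by linarith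
  next
    case False
    let ?P = "S \<inter> {..<N}"
    have "S - {..<2 * N} = {}"
      using apex_block False by (simp only: if_False)
    then have "S \<subseteq> {..<2 * N}"
      by blast
    moreover have "v \<in> S \<longleftrightarrow> N + v \<in> S" if "v < N" for v
      using card_Int_triple_ne_one(2)[OF middle[OF that]] False that by simp
    ultimately have card_S: "card S = 2 * card ?P"
      by (rule card_eq_double_if_pairs)
    have "?P \<noteq> {}"
      using card_S S(1) fin by auto
    moreover have "colsum A ?P i \<noteq> 1" if "i < r" for i
      using no_one[of i] colsum_doubling_top[OF fin that] that by simp
    ultimately have "b \<le> card ?P"
      using A by (simp add: one_free_card_ge_def one_free_def)
    then show ?thesis
      using card_S assms(2) by linarith
  qed
qed

lemma exists_one_free_card_ge:
  assumes "1 \<le> m"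
  shows "\<exists>A. one_free_card_ge ((2 ^ k - 1) * m - k) ((2 ^ k - 1) * m) A (2 ^ (k - 1) * m)"
proof (induction k)
  case 0
  \<comment> \<open>no columns, so the bound (with the junk value 2^(0-1) = 1) holds vacuously\<close>
  show ?case
    by (simp add: one_free_card_ge_no_columns)
next
  case (Suc k)
  let ?N = "(2 ^ k - 1) * m"
  obtain A where A: "one_free_card_ge (?N - k) ?N A (2 ^ (k - 1) * m)"
    using Suc.IH by blast
  have pow: "(2::nat) ^ k = 2 ^ k - 1 + 1"
    by simp
  then have N_plus_m: "?N + m = 2 ^ k * m"
    by (metis add_mult_distrib mult_1)
  have "(2::nat) ^ k \<le> 2 * 2 ^ (k - 1)"
    by (cases k) simp_all
  then have "?N + m \<le> 2 * (2 ^ (k - 1) * m)"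
    unfolding N_plus_m by simp
  then have "one_free_card_ge (?N - k + ?N + (m - 1)) (2 * ?N + m) (doubling (?N - k) ?N A) (?N + m)"
    using one_free_card_ge_doubling[OF A] by blast
  moreover have "(2 ^ Suc k - 1) * m = 2 * ?N + m"
    using pow by (simp add: algebra_simps)
  moreover have "?N - k + ?N + (m - 1) = 2 * ?N + m - Suc k"
    using le_pred_two_power_mult[OF assms, of k] assms by linarith
  ultimately show ?case
    using N_plus_m by auto
qed

lemma one_free_if_even_set: "even_set m n A S \<Longrightarrow> one_free m n A S"
  by (fastforce simp: even_set_def one_free_def)

lemma eps_mat_le_card: "even_set m n A S \<Longrightarrow> eps_mat m n A \<le> card S"
  unfolding eps_mat_def by (rule Least_le) blast

lemma u_mat_le_eps_mat:
  assumes "even_set m n A S"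
  shows "u_mat m n A \<le> eps_mat m n A"
proof -
  have "\<exists>T. even_set m n A T \<and> card T = eps_mat m n A"
    unfolding eps_mat_def by (rule LeastI_ex) (use assms in blast)
  then obtain T where T: "even_set m n A T" "card T = eps_mat m n A"
    by blast
  have "u_mat m n A \<le> card T"
    unfolding u_mat_def by (rule Least_le) (use one_free_if_even_set[OF T(1)] in blast)
  then show ?thesis
    using T(2) by simp
qed

lemma le_u_mat:
  assumes "one_free_card_ge m n A b" "one_free m n A S"
  shows "b \<le> u_mat m n A"
proof -
  have "\<exists>T. one_free m n A T \<and> card T = u_mat m n A"
    unfolding u_mat_def by (rule LeastI_ex) (use assms(2) in blast)
  then obtain T where T: "one_free m n A T" "card T = u_mat m n A"
    by blast
  have "b \<le> card T"
    using assms(1) T(1) unfolding one_free_card_ge_def by blast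
  then show ?thesis
    using T(2) by simp
qed

lemma Max_range_eqI:
  fixes f :: "'a \<Rightarrow> nat"
  assumes "\<And>x. f x \<le> b" "f a = b"
  shows "Max {f x | x. True} = b"
proof (rule Max_eqI)
  show "finite {f x | x. True}"
    using assms(1) by (intro finite_subset[OF _ finite_atMost[of b]]) auto
qed (use assms in auto)

theorem theorem6p3:
  fixes k m :: nat
  assumes "k \<ge> 2" and "m \<ge> 1"
  shows "u ((2^k - 1) * m - k) ((2^k - 1) * m) = 2^(k-1) * m
       \<and> eps ((2^k - 1) * m - k) ((2^k - 1) * m) = 2^(k-1) * m"
proof -
  let ?n = "(2 ^ k - 1) * m" and ?b = "2 ^ (k - 1) * m"
  have small_even_set: "\<exists>S. even_set (?n - k) ?n A S \<and> card S \<le> ?b" for A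
    using exists_even_set_card_le_half assms by simp
  have eps_le: "eps_mat (?n - k) ?n A \<le> ?b" for A
    using small_even_set[of A] eps_mat_le_card order_trans by blast
  have u_le: "u_mat (?n - k) ?n A \<le> ?b" for A
    using small_even_set[of A] u_mat_le_eps_mat eps_le order_trans by blast
  obtain A where A: "one_free_card_ge (?n - k) ?n A ?b"
    using exists_one_free_card_ge assms(2) by blast
  obtain S where S: "even_set (?n - k) ?n A S"
    using small_even_set by blast
  have "?b \<le> u_mat (?n - k) ?n A"
    using A one_free_if_even_set[OF S] by (rule le_u_mat)
  then have u_A: "u_mat (?n - k) ?n A = ?b"
    using u_le[of A] by simp
  have eps_A: "eps_mat (?n - k) ?n A = ?b"
    using u_mat_le_eps_mat[OF S] eps_le[of A] u_A by simp
  have "u (?n - k) ?n = ?b"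
    unfolding u_def using u_le u_A by (rule Max_range_eqI[of "u_mat (?n - k) ?n"])
  moreover have "eps (?n - k) ?n = ?b"
    unfolding eps_def using eps_le eps_A by (rule Max_range_eqI[of "eps_mat (?n - k) ?n"])
  ultimately show ?thesis ..
qed

end
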